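(* Let $d\ge 2$ and $n\ge 2$ be integers. Let $R=\mathbb{Q}[a_{i,j}:1\le i,j\le n]$ be the polynomial ring in $n^2$ indeterminates, let $A$ be the $n\times n$ matrix with $A_{i,j}=a_{i,j}$, and let $f=(f_1,\dots,f_n)$ with $f_i=x_i-\big(\sum_{j=1}^n a_{i,j}x_j\big)^d\in R[x_1,\dots,x_n]$. Write \[ \mathrm{Jac}(f)=\det\Big(\frac{\partial f_i}{\partial x_j}\Big)_{1\le i,j\le n}=\sum_{\alpha} J_\alpha x^\alpha,\qquad J_\alpha\in R, \] over multi-degrees $\alpha\in\mathbb{Z}_{\ge0}^n$. For integers $1\le k\le n-1$ and $1\le l\le n$, let $\alpha(k,l)$ be the multi-degree with $\alpha_l=k(d-1)$ and $\alpha_i=0$ for $i\ne l$. Then \[ J_{\alpha(k,l)}=(-d)^k\sum_{1\le i_1<i_2<\cdots<i_k\le n}|A|_{(i_1,\ldots,i_k)}\prod_{r=1}^k a_{i_r,l}^{\,d-1}, \] where $|A|_{(i_1,\ldots,i_k)}$ denotes the principal minor of $A$ on rows and columns $i_1,\ldots,i_k$. *)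

theory Defs
  imports "HOL-Library.Poly_Mapping" "Jordan_Normal_Form.Determinant"
begin

text \<open>Multivariate polynomials: monomials are finitely supported exponent maps
 'v \<Rightarrow>0 nat, polynomials are finitely supported coefficient maps on monomials
 (multiplication is convolution, as provided by HOL-Library.Poly_Mapping).\<close>

type_synonym ('v, 'r) mpoly = "('v \<Rightarrow>\<^sub>0 nat) \<Rightarrow>\<^sub>0 'r"

text \<open>The base ring R = Q[a_(i,j)], variables indexed by pairs (i,j), 0-based.\<close>
type_synonym R = "(nat \<times> nat, rat) mpoly"

type_synonym RX = "(nat, R) mpoly"

definition mvar :: "'v \<Rightarrow> ('v, 'r::comm_semiring_1) mpoly" where
  "mvar v = Poly_Mapping.single (Poly_Mapping.single v 1) 1"

definition mconst :: "'r \<Rightarrow> ('v, 'r::comm_semiring_1) mpoly" where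
  "mconst c = Poly_Mapping.single 0 c"

definition mpderiv :: "'v \<Rightarrow> ('v, 'r::comm_semiring_1) mpoly \<Rightarrow> ('v, 'r) mpoly" where
  "mpderiv v p = (\<Sum>m\<in>Poly_Mapping.keys p.
      Poly_Mapping.single (m - Poly_Mapping.single v 1) (of_nat (Poly_Mapping.lookup m v) * Poly_Mapping.lookup p m))"

definition avar :: "nat \<Rightarrow> nat \<Rightarrow> R" where
  "avar i j = mvar (i, j)"

definition fcomp :: "nat \<Rightarrow> nat \<Rightarrow> nat \<Rightarrow> RX" where
  "fcomp n d i = mvar i - (\<Sum>j<n. mconst (avar i j) * mvar j) ^ d"

definition Jac :: "nat \<Rightarrow> nat \<Rightarrow> RX" where
  "Jac n d = det (mat n n (\<lambda>(i, j). mpderiv j (fcomp n d i)))"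

definition principal_minor :: "nat set \<Rightarrow> R" where
  "principal_minor S = (let xs = sorted_list_of_set S in
     det (mat (length xs) (length xs) (\<lambda>(r, s). avar (xs ! r) (xs ! s))))"

end

theory Submission
  imports Defs
begin

(* With L_i = sum_j a_ij x_j, the Jacobian matrix of f is I + diag(u) A where
   u_i = -d L_i^(d-1). Expanding the determinant along the identity gives
   Jac(f) = sum_S (prod_(i in S) u_i) |A|_S over all index sets S. A coefficient of a pure
   power of x_l does not change when all other variables are set to 0; this substitution is a
   ring homomorphism sending L_i to a_il x_l, so the term of S becomes
   (-d)^|S| |A|_S (prod_(i in S) a_il^(d-1)) x_l^(|S|(d-1)). Since d >= 2, only the sets with
   |S| = k contribute to the monomial x_l^(k(d-1)). *)

lemma poly_mapping_sum_single:
  "p = (\<Sum>m\<in>Poly_Mapping.keys p. Poly_Mapping.single m (Poly_Mapping.lookup p m))"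
proof (rule poly_mapping_eqI)
  fix k
  show "Poly_Mapping.lookup p k =
      Poly_Mapping.lookup (\<Sum>m\<in>Poly_Mapping.keys p. Poly_Mapping.single m (Poly_Mapping.lookup p m)) k"
    by (cases "k \<in> Poly_Mapping.keys p") (auto simp: lookup_sum lookup_single when_def in_keys_iff)
qed

lemma poly_mapping_single_induct [case_names zero single add]:
  fixes p :: "'a \<Rightarrow>\<^sub>0 'b::comm_monoid_add"
  assumes "P 0" and "\<And>a c. P (Poly_Mapping.single a c)"
    and "\<And>p q. P p \<Longrightarrow> P q \<Longrightarrow> P (p + q)"
  shows "P p"
proof -
  have "P (\<Sum>m\<in>K. Poly_Mapping.single m (Poly_Mapping.lookup p m))" if "finite K" for K
    using that by (induction K rule: finite_induct) (auto simp: assms)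
  then show ?thesis
    using poly_mapping_sum_single[of p] by (metis finite_keys)
qed

lemma mpderiv_eq_sum_over_superset:
  fixes p :: "('v, 'r::comm_semiring_1) mpoly"
  assumes "finite K" and "Poly_Mapping.keys p \<subseteq> K"
  shows "mpderiv v p = (\<Sum>m\<in>K. Poly_Mapping.single (m - Poly_Mapping.single v 1)
            (of_nat (Poly_Mapping.lookup m v) * Poly_Mapping.lookup p m))"
  unfolding mpderiv_def
  by (rule sum.mono_neutral_left) (use assms in \<open>auto simp: in_keys_iff\<close>)

lemma mpderiv_single:
  fixes c :: "'r::comm_semiring_1"
  shows "mpderiv v (Poly_Mapping.single a c) =
    Poly_Mapping.single (a - Poly_Mapping.single v 1) (of_nat (Poly_Mapping.lookup a v) * c)"
  by (subst mpderiv_eq_sum_over_superset[of "{a}"]) auto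

lemma mpderiv_zero [simp]: "mpderiv v 0 = 0"
  by (simp add: mpderiv_def)

lemma mpderiv_add:
  fixes p q :: "('v, 'r::comm_semiring_1) mpoly"
  shows "mpderiv v (p + q) = mpderiv v p + mpderiv v q"
proof -
  define K where "K = Poly_Mapping.keys p \<union> Poly_Mapping.keys q \<union> Poly_Mapping.keys (p + q)"
  have "finite K"
    by (simp add: K_def)
  then show ?thesis
    by (subst (1 2 3) mpderiv_eq_sum_over_superset[OF \<open>finite K\<close>])
       (auto simp: K_def lookup_add distrib_left single_add sum.distrib)
qed

lemma mpderiv_sum:
  fixes f :: "'b \<Rightarrow> ('v, 'r::comm_semiring_1) mpoly"
  shows "mpderiv v (sum f A) = (\<Sum>x\<in>A. mpderiv v (f x))"
  by (induction A rule: infinite_finite_induct) (auto simp: mpderiv_add)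

lemma mpderiv_diff:
  fixes p q :: "('v, 'r::comm_ring_1) mpoly"
  shows "mpderiv v (p - q) = mpderiv v p - mpderiv v q"
  using mpderiv_add[of v "p - q" q] by (simp add: eq_diff_eq)

lemma monomial_add_diff_var:
  fixes a b :: "'v \<Rightarrow>\<^sub>0 nat"
  assumes "Poly_Mapping.lookup a v \<noteq> 0"
  shows "a + b - Poly_Mapping.single v 1 = a - Poly_Mapping.single v 1 + b"
  by (rule poly_mapping_eqI) (use assms in \<open>auto simp: lookup_add lookup_minus lookup_single when_def\<close>)

lemma mpderiv_mult_single:
  fixes c e :: "'r::comm_semiring_1"
  shows "mpderiv v (Poly_Mapping.single a c * Poly_Mapping.single b e) =
    mpderiv v (Poly_Mapping.single a c) * Poly_Mapping.single b e +
    Poly_Mapping.single a c * mpderiv v (Poly_Mapping.single b e)"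
proof -
  let ?x = "Poly_Mapping.single v 1"
  have left: "Poly_Mapping.single (a + b - ?x) (of_nat (Poly_Mapping.lookup a v) * (c * e)) =
      Poly_Mapping.single (a - ?x + b) (of_nat (Poly_Mapping.lookup a v) * c * e)"
  proof (cases "Poly_Mapping.lookup a v = 0")
    case False
    then show ?thesis
      by (subst monomial_add_diff_var[OF False]) (simp add: mult.assoc)
  qed simp
  have right: "Poly_Mapping.single (a + b - ?x) (of_nat (Poly_Mapping.lookup b v) * (c * e)) =
      Poly_Mapping.single (a + (b - ?x)) (c * (of_nat (Poly_Mapping.lookup b v) * e))"
  proof (cases "Poly_Mapping.lookup b v = 0")
    case False
    then show ?thesis
      by (subst add.commute, subst monomial_add_diff_var[OF False]) (simp add: algebra_simps)
  qed simp
  show ?thesis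
    by (simp only: mult_single mpderiv_single lookup_add of_nat_add distrib_right single_add
        left right)
qed

lemma mpderiv_mult:
  fixes p q :: "('v, 'r::comm_semiring_1) mpoly"
  shows "mpderiv v (p * q) = mpderiv v p * q + p * mpderiv v q"
proof (induction p arbitrary: q rule: poly_mapping_single_induct)
  case (single a c)
  show ?case
  proof (induction q rule: poly_mapping_single_induct)
    case (single b e)
    then show ?case by (rule mpderiv_mult_single)
  next
    case (add q1 q2)
    then show ?case by (simp only: distrib_left mpderiv_add) (simp add: algebra_simps)
  qed simp
next
  case (add p1 p2)
  then show ?case by (simp only: distrib_right mpderiv_add) (simp add: algebra_simps)
qed simp

lemma mpderiv_power:
  fixes p :: "('v, 'r::comm_semiring_1) mpoly"
  shows "mpderiv v (p ^ Suc m) = of_nat (Suc m) * p ^ m * mpderiv v p"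
  by (induction m) (simp_all add: mpderiv_mult algebra_simps)

lemma mpderiv_mconst [simp]: "mpderiv v (mconst c) = 0"
  by (simp add: mconst_def mpderiv_single)

lemma mpderiv_mvar: "mpderiv v (mvar j :: ('v, 'r::comm_semiring_1) mpoly) = (if j = v then 1 else 0)"
  by (simp add: mvar_def mpderiv_single lookup_single)

interpretation mconst_hom: comm_ring_hom "mconst :: 'r::comm_ring_1 \<Rightarrow> ('v, 'r) mpoly"
  by unfold_locales (auto simp: mconst_def single_add mult_single)

(* Substitution of 0 for every variable other than l, hence a ring homomorphism. *)
definition var_part :: "'v \<Rightarrow> ('v, 'r::comm_ring_1) mpoly \<Rightarrow> ('v, 'r) mpoly" where
  "var_part l p =
     Abs_poly_mapping (\<lambda>m. if Poly_Mapping.keys m \<subseteq> {l} then Poly_Mapping.lookup p m else 0)"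

lemma lookup_var_part:
  "Poly_Mapping.lookup (var_part l p) m =
    (if Poly_Mapping.keys m \<subseteq> {l} then Poly_Mapping.lookup p m else 0)"
proof -
  have "finite {m. (if Poly_Mapping.keys m \<subseteq> {l} then Poly_Mapping.lookup p m else 0) \<noteq> 0}"
    by (rule finite_subset[OF _ finite_keys[of p]]) (auto simp: in_keys_iff)
  then show ?thesis
    unfolding var_part_def by (simp add: Abs_poly_mapping_inverse)
qed

lemma lookup_var_part_single_var:
  "Poly_Mapping.lookup (var_part l p) (Poly_Mapping.single l N) =
    Poly_Mapping.lookup p (Poly_Mapping.single l N)"
  by (simp add: lookup_var_part)

lemma var_part_add: "var_part l (p + q) = var_part l p + var_part l q"
  by (rule poly_mapping_eqI) (simp add: lookup_var_part lookup_add)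

lemma var_part_zero [simp]: "var_part l 0 = 0"
  by (rule poly_mapping_eqI) (simp add: lookup_var_part)

lemma var_part_single:
  "var_part l (Poly_Mapping.single m c) =
    (if Poly_Mapping.keys m \<subseteq> {l} then Poly_Mapping.single m c else 0)"
  by (rule poly_mapping_eqI) (auto simp: lookup_var_part lookup_single when_def)

lemma var_part_mult: "var_part l (p * q) = var_part l p * var_part l q"
proof (induction p arbitrary: q rule: poly_mapping_single_induct)
  case zero
  then show ?case by simp
next
  case (single a c)
  show ?case
  proof (induction q rule: poly_mapping_single_induct)
    case zero
    then show ?case by simp
  next
    case (single b e)
    have "Poly_Mapping.keys (a + b) = Poly_Mapping.keys a \<union> Poly_Mapping.keys b"
      by (auto simp: in_keys_iff lookup_add)
    then show ?case by (simp add: mult_single var_part_single)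
  next
    case (add q1 q2)
    then show ?case by (simp add: distrib_left var_part_add)
  qed
next
  case (add p1 p2)
  then show ?case by (simp add: distrib_right var_part_add)
qed

interpretation var_part_hom: comm_ring_hom "var_part l :: ('v, 'r::comm_ring_1) mpoly \<Rightarrow> ('v, 'r) mpoly"
  using var_part_single[of l 0 1] by unfold_locales (simp_all add: var_part_add var_part_mult)

lemma var_part_mconst [simp]: "var_part l (mconst c) = mconst c"
  by (simp add: mconst_def var_part_single)

lemma var_part_mvar: "var_part l (mvar j :: ('v, 'r::comm_ring_1) mpoly) = (if j = l then mvar l else 0)"
  by (simp add: mvar_def var_part_single)

lemma mvar_power:
  "mvar l ^ N = (Poly_Mapping.single (Poly_Mapping.single l N) 1 :: ('v, 'r::comm_semiring_1) mpoly)"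
  by (induction N) (auto simp: mvar_def mult_single single_add[symmetric])

lemma lookup_mconst_mult_mvar_power:
  "Poly_Mapping.lookup (mconst c * mvar l ^ N :: ('v, 'r::comm_semiring_1) mpoly) (Poly_Mapping.single l M) =
    (if N = M then c else 0)"
proof -
  have "Poly_Mapping.single l N = Poly_Mapping.single l M \<longleftrightarrow> N = M"
    by (metis lookup_single_eq)
  then show ?thesis
    by (simp add: mvar_power mconst_def mult_single lookup_single when_def)
qed

(* The Leibniz formula indexed by S itself, so that no enumeration of S is needed. *)
definition leibniz_minor :: "('i \<Rightarrow> 'i \<Rightarrow> 'a::comm_ring_1) \<Rightarrow> 'i set \<Rightarrow> 'a" where
  "leibniz_minor B S = (\<Sum>p\<in>{p. p permutes S}. of_int (sign p) * (\<Prod>i\<in>S. B i (p i)))"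

lemma (in comm_ring_hom) hom_leibniz_minor:
  "hom (leibniz_minor B S) = leibniz_minor (\<lambda>i j. hom (B i j)) S"
  by (simp add: leibniz_minor_def hom_distribs)

lemma det_mat_eq_leibniz_minor: "det (mat n n f) = leibniz_minor (\<lambda>i j. f (i, j)) {0..<n}"
  unfolding det_def leibniz_minor_def
proof (simp only: dim_row_mat dim_col_mat simp_thms if_True, rule sum.cong[OF refl])
  fix p assume "p \<in> {p. p permutes {0..<n}}"
  then have "i < n \<Longrightarrow> p i < n" for i
    using permutes_in_image by fastforce
  then show "signof p * (\<Prod>i = 0..<n. mat n n f $$ (i, p i)) = signof p * (\<Prod>i = 0..<n. f (i, p i))"
    by simp
qed

lemma leibniz_minor_reindex:
  assumes bij: "bij_betw g A B" and "finite A"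
  shows "leibniz_minor (\<lambda>r s. M (g r) (g s)) A = leibniz_minor M B"
proof -
  let ?conj = "\<lambda>\<pi> x. if x \<in> B then g (\<pi> (inv_into A g x)) else x"
  have inj: "inj_on g A"
    using bij by (rule bij_betw_imp_inj_on)
  have "leibniz_minor M B =
      (\<Sum>\<pi>\<in>{\<pi>. \<pi> permutes A}. of_int (sign (?conj \<pi>)) * (\<Prod>i\<in>B. M i (?conj \<pi> i)))"
    unfolding leibniz_minor_def
    by (rule sum.reindex_bij_betw[OF bij_betw_permutations[OF bij], symmetric])
  also have "\<dots> = leibniz_minor (\<lambda>r s. M (g r) (g s)) A"
    unfolding leibniz_minor_def
  proof (rule sum.cong[OF refl])
    fix \<pi> assume "\<pi> \<in> {\<pi>. \<pi> permutes A}"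
    then interpret permutes_bij_finite \<pi> A B g "inv_into A g" "?conj \<pi>"
      by unfold_locales (use bij inj \<open>finite A\<close> in \<open>auto simp: inv_into_f_f\<close>)
    have "(\<Prod>i\<in>B. M i (?conj \<pi> i)) = (\<Prod>r\<in>A. M (g r) (?conj \<pi> (g r)))"
      by (rule prod.reindex_bij_betw[OF bij, symmetric])
    also have "\<dots> = (\<Prod>r\<in>A. M (g r) (g (\<pi> r)))"
      using bij inj by (intro prod.cong refl) (auto simp: inv_into_f_f bij_betw_def)
    finally show "of_int (sign (?conj \<pi>)) * (\<Prod>i\<in>B. M i (?conj \<pi> i)) =
        of_int (sign \<pi>) * (\<Prod>r\<in>A. M (g r) (g (\<pi> r)))"
      by (simp add: sign_p')
  qed
  finally show ?thesis ..
qed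

lemma principal_minor_eq_leibniz_minor:
  assumes "finite S"
  shows "principal_minor S = leibniz_minor avar S"
proof -
  define xs where "xs = sorted_list_of_set S"
  have "bij_betw ((!) xs) {0..<length xs} S"
    by (rule bij_betw_nth) (auto simp: xs_def assms)
  then show ?thesis
    by (simp add: principal_minor_def xs_def[symmetric] det_mat_eq_leibniz_minor leibniz_minor_reindex)
qed

lemma permutes_subset_iff_fixes_outside:
  assumes "X \<subseteq> A"
  shows "p permutes A \<and> (\<forall>i\<in>A - X. p i = i) \<longleftrightarrow> p permutes X"
proof
  assume "p permutes X"
  then show "p permutes A \<and> (\<forall>i\<in>A - X. p i = i)"
    by (simp add: permutes_subset[OF _ assms] permutes_not_in)
next
  assume p: "p permutes A \<and> (\<forall>i\<in>A - X. p i = i)"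
  have "p x = x" if "x \<notin> X" for x
  proof (cases "x \<in> A")
    case True
    then show ?thesis using p that by blast
  next
    case False
    then show ?thesis using p permutes_not_in by metis
  qed
  moreover have "\<forall>y. \<exists>!x. p x = y"
    using p unfolding permutes_def by simp
  ultimately show "p permutes X"
    unfolding permutes_def by simp
qed

lemma prod_indicator_fixed:
  "finite F \<Longrightarrow>
    (\<Prod>i\<in>F. if i = p i then 1 else 0 :: 'a::comm_semiring_1) = (if \<forall>i\<in>F. p i = i then 1 else 0)"
  by (induction F rule: finite_induct) auto

(* Multiply out the product of the binomials entry by entry: the permutations
   contributing to the subset X of the non-identity factors are those fixing A - X. *)
lemma leibniz_minor_one_plus_diag_mult:
  fixes u :: "'i \<Rightarrow> 'a::comm_ring_1"
  assumes "finite A"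
  shows "leibniz_minor (\<lambda>i j. (if i = j then 1 else 0) + u i * B i j) A =
    (\<Sum>X\<in>Pow A. (\<Prod>i\<in>X. u i) * leibniz_minor B X)"
proof -
  let ?P = "{p. p permutes A}"
  let ?fixes = "\<lambda>p X. \<forall>i\<in>A - X. p i = i"
  have "leibniz_minor (\<lambda>i j. (if i = j then 1 else 0) + u i * B i j) A =
      (\<Sum>p\<in>?P. \<Sum>X\<in>Pow A.
         of_int (sign p) * ((\<Prod>i\<in>X. u i * B i (p i)) * (if ?fixes p X then 1 else 0)))"
    unfolding leibniz_minor_def
    by (rule sum.cong[OF refl])
       (simp add: add.commute[of "if _ then _ else _"] prod_add sum_distrib_left prod_indicator_fixed assms)
  also have "\<dots> = (\<Sum>p\<in>?P. \<Sum>X\<in>Pow A.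
      if ?fixes p X then (\<Prod>i\<in>X. u i) * (of_int (sign p) * (\<Prod>i\<in>X. B i (p i))) else 0)"
    by (intro sum.cong refl) (simp add: prod.distrib mult.left_commute)
  also have "\<dots> = (\<Sum>X\<in>Pow A. \<Sum>p\<in>{p\<in>?P. ?fixes p X}.
      (\<Prod>i\<in>X. u i) * (of_int (sign p) * (\<Prod>i\<in>X. B i (p i))))"
    by (rule trans[OF sum.swap], rule sum.cong[OF refl], rule sum.inter_filter[symmetric],
        rule finite_permutations[OF assms])
  also have "\<dots> = (\<Sum>X\<in>Pow A. (\<Prod>i\<in>X. u i) * leibniz_minor B X)"
  proof (rule sum.cong[OF refl])
    fix X assume "X \<in> Pow A"
    then have "{p\<in>?P. ?fixes p X} = {p. p permutes X}"
      using permutes_subset_iff_fixes_outside[of X A] by auto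
    then show "(\<Sum>p\<in>{p\<in>?P. ?fixes p X}. (\<Prod>i\<in>X. u i) * (of_int (sign p) * (\<Prod>i\<in>X. B i (p i)))) =
        (\<Prod>i\<in>X. u i) * leibniz_minor B X"
      by (simp add: leibniz_minor_def sum_distrib_left)
  qed
  finally show ?thesis .
qed

definition lin_form :: "nat \<Rightarrow> nat \<Rightarrow> RX" where
  "lin_form n i = (\<Sum>j<n. mconst (avar i j) * mvar j)"

lemma mpderiv_lin_form:
  assumes "j < n"
  shows "mpderiv j (lin_form n i) = mconst (avar i j)"
proof -
  have "mpderiv j (lin_form n i) = (\<Sum>j'<n. if j' = j then mconst (avar i j') else 0)"
    unfolding lin_form_def mpderiv_sum
    by (intro sum.cong refl) (simp add: mpderiv_mult mpderiv_mvar)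
  with assms show ?thesis
    by simp
qed

lemma mpderiv_fcomp:
  assumes "d \<ge> 1" and "j < n"
  shows "mpderiv j (fcomp n d i) =
    (if i = j then 1 else 0) + (- of_nat d * lin_form n i ^ (d - 1)) * mconst (avar i j)"
proof -
  have "mpderiv j (lin_form n i ^ Suc (d - 1)) = of_nat d * lin_form n i ^ (d - 1) * mconst (avar i j)"
    using assms by (simp only: mpderiv_power mpderiv_lin_form) simp
  with assms show ?thesis
    by (simp add: fcomp_def lin_form_def[symmetric] mpderiv_diff mpderiv_mvar)
qed

lemma Jac_eq_sum_principal_minors:
  assumes "d \<ge> 1"
  shows "Jac n d =
    (\<Sum>S\<in>Pow {0..<n}. (\<Prod>i\<in>S. - of_nat d * lin_form n i ^ (d - 1)) * mconst (principal_minor S))"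
proof -
  let ?u = "\<lambda>i. - of_nat d * lin_form n i ^ (d - 1)"
  have "Jac n d = det (mat n n (\<lambda>(i, j). (if i = j then 1 else 0) + ?u i * mconst (avar i j)))"
    unfolding Jac_def using assms
    by (intro arg_cong[where f = det] eq_matI) (simp_all add: mpderiv_fcomp)
  also have "\<dots> = (\<Sum>S\<in>Pow {0..<n}. (\<Prod>i\<in>S. ?u i) * leibniz_minor (\<lambda>i j. mconst (avar i j)) S)"
    unfolding det_mat_eq_leibniz_minor case_prod_conv by (rule leibniz_minor_one_plus_diag_mult) simp
  also have "\<dots> = (\<Sum>S\<in>Pow {0..<n}. (\<Prod>i\<in>S. ?u i) * mconst (principal_minor S))"
    by (intro sum.cong refl)
       (auto simp: mconst_hom.hom_leibniz_minor principal_minor_eq_leibniz_minor finite_subset)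
  finally show ?thesis .
qed

lemma var_part_lin_form:
  assumes "l < n"
  shows "var_part l (lin_form n i) = mconst (avar i l) * mvar l"
proof -
  have "var_part l (lin_form n i) = (\<Sum>j<n. if j = l then mconst (avar i j) * mvar l else 0)"
    unfolding lin_form_def var_part_hom.hom_sum
    by (intro sum.cong refl) (simp add: var_part_hom.hom_mult var_part_mvar)
  with assms show ?thesis
    by simp
qed

lemma var_part_Jac:
  assumes "d \<ge> 1" and "l < n"
  shows "var_part l (Jac n d) =
    (\<Sum>S\<in>Pow {0..<n}.
       mconst ((- of_nat d) ^ card S * principal_minor S * (\<Prod>i\<in>S. avar i l ^ (d - 1))) *
       mvar l ^ (card S * (d - 1)))"
proof -
  have factor: "var_part l (- of_nat d * lin_form n i ^ (d - 1)) =
      mconst (- of_nat d * avar i l ^ (d - 1)) * mvar l ^ (d - 1)" for i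
    using assms(2) by (simp add: hom_distribs var_part_lin_form power_mult_distrib)
  have var_part_factors: "var_part l (\<Prod>i\<in>S. - of_nat d * lin_form n i ^ (d - 1)) =
      mconst ((- of_nat d) ^ card S * (\<Prod>i\<in>S. avar i l ^ (d - 1))) * mvar l ^ (card S * (d - 1))"
    for S
  proof -
    have "var_part l (\<Prod>i\<in>S. - of_nat d * lin_form n i ^ (d - 1)) =
        (\<Prod>i\<in>S. mconst (- of_nat d * avar i l ^ (d - 1)) * mvar l ^ (d - 1))"
      by (simp only: var_part_hom.hom_prod factor)
    also have "\<dots> = mconst (\<Prod>i\<in>S. - of_nat d * avar i l ^ (d - 1)) * (mvar l ^ (d - 1)) ^ card S"
      by (simp only: prod.distrib prod_constant flip: mconst_hom.hom_prod)
    also have "\<dots> = mconst ((- of_nat d) ^ card S * (\<Prod>i\<in>S. avar i l ^ (d - 1))) *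
        mvar l ^ (card S * (d - 1))"
      by (simp only: prod.distrib prod_constant mult.commute[of "card S"] power_mult)
    finally show ?thesis .
  qed
  have "var_part l (Jac n d) = (\<Sum>S\<in>Pow {0..<n}.
      var_part l (\<Prod>i\<in>S. - of_nat d * lin_form n i ^ (d - 1)) * mconst (principal_minor S))"
    by (simp only: Jac_eq_sum_principal_minors[OF assms(1)] var_part_hom.hom_sum var_part_hom.hom_mult
        var_part_mconst)
  then show ?thesis
    by (simp only: var_part_factors mconst_hom.hom_mult mult_ac)
qed

theorem mainTheorem2:
  fixes n d k l :: nat
  assumes "d \<ge> 2" and "n \<ge> 2"
    and "1 \<le> k" and "k \<le> n - 1"
    and "l < n"
  shows "Poly_Mapping.lookup (Jac n d) (Poly_Mapping.single l (k * (d - 1))) =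
         (- of_nat d) ^ k *
         (\<Sum>S\<in>{S. S \<subseteq> {0..<n} \<and> card S = k}.
             principal_minor S * (\<Prod>r\<in>S. avar r l ^ (d - 1)))"
proof -
  (* Only d >= 2, which makes card S * (d - 1) determine card S, and l < n are needed. *)
  let ?c = "\<lambda>S. (- of_nat d) ^ card S * principal_minor S * (\<Prod>i\<in>S. avar i l ^ (d - 1))"
  have "Poly_Mapping.lookup (Jac n d) (Poly_Mapping.single l (k * (d - 1))) =
      Poly_Mapping.lookup (var_part l (Jac n d)) (Poly_Mapping.single l (k * (d - 1)))"
    by (rule lookup_var_part_single_var[symmetric])
  also have "\<dots> = (\<Sum>S\<in>Pow {0..<n}. if card S = k then ?c S else 0)"
    using assms by (auto simp: var_part_Jac lookup_sum lookup_mconst_mult_mvar_power intro: sum.cong)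
  also have "\<dots> = (\<Sum>S\<in>{S. S \<subseteq> {0..<n} \<and> card S = k}. ?c S)"
    by (simp add: sum.inter_filter[symmetric] Pow_def conj_commute)
  finally show ?thesis
    by (simp add: sum_distrib_left mult.assoc)
qed

end
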